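(* Let $\mathcal F,\mathcal G,\mathcal H$ be exact categories and $\gamma\colon\mathcal F\to\mathcal G$, $\eta\colon\mathcal G\to\mathcal H$ exact functors. (a) If $\eta\gamma$ reflects admissible epimorphisms (resp. admissible monomorphisms, resp. exact sequences), then so does $\gamma$. If $\eta\gamma$ satisfies ($*'$), then so does $\eta$. (b) If $\gamma$ satisfies ($*'$) and $\eta\gamma$ satisfies (i$'$), then $\eta$ satisfies (i$'$). (c) If $\gamma$ satisfies ($*'$) and $\eta\gamma$ satisfies ($**'$), then $\eta$ satisfies ($**'$). (d) If $\gamma$ satisfies ($*'$), and $\eta\gamma$ satisfies (i$'$), (ii$'$), ($*'$), ($**'$) and reflects admissible epimorphisms, then $\eta$ satisfies (ii$'$).
   Context: Exact categories in Quillen's sense. For an exact functor $\theta\colon\mathcal A\to\mathcal B$: (i$'$) for any $X\in\mathcal A$ and any admissible epimorphism $T\to\theta(X)$ in $\mathcal B$ there exist an admissible epimorphism $Z\to X$ in $\mathcal A$ and a morphism $\theta(Z)\to T$ such that $\theta(Z)\to T\to\theta(X)$ equals $\theta(Z\to X)$; (ii$'$) for any $X,Y\in\mathcal A$ and any morphism $g\colon\theta(X)\to\theta(Y)$ there exist an admissible epimorphism $p\colon X'\to X$ and a morphism $h\colon X'\to Y$ in $\mathcal A$ with $g\circ\theta(p)=\theta(h)$; ($*'$) for any $T\in\mathcal B$ there exist $U\in\mathcal A$ and an admissible epimorphism $\theta(U)\to T$; ($**'$) for any $X\in\mathcal A$ and any morphism $g\colon\theta(X)\to T$ in $\mathcal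 B$ there exist an admissible epimorphism $p\colon X'\to X$ in $\mathcal A$, a morphism $h\colon X'\to S$ in $\mathcal A$ and an admissible epimorphism $e\colon\theta(S)\to T$ in $\mathcal B$ with $g\circ\theta(p)=e\circ\theta(h)$. *)

theory Defs
  imports Main
begin

text \<open>A (small) category is given by a set of objects, a set of arrows, domain,
codomain, identities and composition (cCmp C g f = g o f).  An exact category
additionally carries the abelian group structure on hom-sets (cPlus, cZero, cNeg)
and the class cConfl of conflations (short exact sequences), each given as a pair
(i, d) of the admissible monomorphism i and the admissible epimorphism d.\<close>

record ('o, 'm) excat =
  cOb    :: "'o set"
  cAr    :: "'m set"
  cDom   :: "'m \<Rightarrow> 'o"
  cCod   :: "'m \<Rightarrow> 'o"
  cId    :: "'o \<Rightarrow> 'm"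
  cCmp   :: "'m \<Rightarrow> 'm \<Rightarrow> 'm"
  cPlus  :: "'m \<Rightarrow> 'm \<Rightarrow> 'm"
  cZero  :: "'o \<Rightarrow> 'o \<Rightarrow> 'm"
  cNeg   :: "'m \<Rightarrow> 'm"
  cConfl :: "('m \<times> 'm) set"

definition hom :: "('o, 'm) excat \<Rightarrow> 'o \<Rightarrow> 'o \<Rightarrow> 'm set" where
  "hom C X Y = {f \<in> cAr C. cDom C f = X \<and> cCod C f = Y}"

definition is_category :: "('o, 'm) excat \<Rightarrow> bool" where
  "is_category C \<longleftrightarrow>
     (\<forall>f\<in>cAr C. cDom C f \<in> cOb C \<and> cCod C f \<in> cOb C) \<and>
     (\<forall>X\<in>cOb C. cId C X \<in> hom C X X) \<and>
     (\<forall>X Y Z f g. f \<in> hom C X Y \<longrightarrow> g \<in> hom C Y Z \<longrightarrow> cCmp C g f \<in> hom C X Z) \<and>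
     (\<forall>X Y f. f \<in> hom C X Y \<longrightarrow> cCmp C (cId C Y) f = f \<and> cCmp C f (cId C X) = f) \<and>
     (\<forall>W X Y Z f g h. f \<in> hom C W X \<longrightarrow> g \<in> hom C X Y \<longrightarrow> h \<in> hom C Y Z \<longrightarrow>
        cCmp C h (cCmp C g f) = cCmp C (cCmp C h g) f)"

definition preadditive :: "('o, 'm) excat \<Rightarrow> bool" where
  "preadditive C \<longleftrightarrow> is_category C \<and>
     (\<forall>X\<in>cOb C. \<forall>Y\<in>cOb C.
        cZero C X Y \<in> hom C X Y \<and>
        (\<forall>f\<in>hom C X Y. cNeg C f \<in> hom C X Y \<and> cPlus C f (cZero C X Y) = f \<and>
                         cPlus C f (cNeg C f) = cZero C X Y) \<and>
        (\<forall>f\<in>hom C X Y. \<forall>g\<in>hom C X Y. cPlus C f g \<in> hom C X Y \<and> cPlus C f g = cPlus C g f) \<and>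
        (\<forall>f\<in>hom C X Y. \<forall>g\<in>hom C X Y. \<forall>h\<in>hom C X Y.
            cPlus C (cPlus C f g) h = cPlus C f (cPlus C g h))) \<and>
     (\<forall>X Y Z f f' g. f \<in> hom C X Y \<longrightarrow> f' \<in> hom C X Y \<longrightarrow> g \<in> hom C Y Z \<longrightarrow>
        cCmp C g (cPlus C f f') = cPlus C (cCmp C g f) (cCmp C g f')) \<and>
     (\<forall>X Y Z f g g'. f \<in> hom C X Y \<longrightarrow> g \<in> hom C Y Z \<longrightarrow> g' \<in> hom C Y Z \<longrightarrow>
        cCmp C (cPlus C g g') f = cPlus C (cCmp C g f) (cCmp C g' f))"

definition is_zero_object :: "('o, 'm) excat \<Rightarrow> 'o \<Rightarrow> bool" where
  "is_zero_object C Z \<longleftrightarrow> Z \<in> cOb C \<and> cId C Z = cZero C Z Z"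

definition is_biproduct ::
  "('o, 'm) excat \<Rightarrow> 'o \<Rightarrow> 'o \<Rightarrow> 'o \<Rightarrow> 'm \<Rightarrow> 'm \<Rightarrow> 'm \<Rightarrow> 'm \<Rightarrow> bool" where
  "is_biproduct C A B P i1 i2 p1 p2 \<longleftrightarrow>
     P \<in> cOb C \<and> i1 \<in> hom C A P \<and> i2 \<in> hom C B P \<and> p1 \<in> hom C P A \<and> p2 \<in> hom C P B \<and>
     cCmp C p1 i1 = cId C A \<and> cCmp C p2 i2 = cId C B \<and>
     cCmp C p2 i1 = cZero C A B \<and> cCmp C p1 i2 = cZero C B A \<and>
     cPlus C (cCmp C i1 p1) (cCmp C i2 p2) = cId C P"

definition additive :: "('o, 'm) excat \<Rightarrow> bool" where
  "additive C \<longleftrightarrow> preadditive C \<and> (\<exists>Z. is_zero_object C Z) \<and>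
     (\<forall>A\<in>cOb C. \<forall>B\<in>cOb C. \<exists>P i1 i2 p1 p2. is_biproduct C A B P i1 i2 p1 p2)"

definition is_kernel :: "('o, 'm) excat \<Rightarrow> 'm \<Rightarrow> 'm \<Rightarrow> bool" where
  "is_kernel C i d \<longleftrightarrow> i \<in> cAr C \<and> d \<in> cAr C \<and> cCod C i = cDom C d \<and>
     cCmp C d i = cZero C (cDom C i) (cCod C d) \<and>
     (\<forall>f\<in>cAr C. cCod C f = cDom C d \<and> cCmp C d f = cZero C (cDom C f) (cCod C d) \<longrightarrow>
        (\<exists>!u. u \<in> hom C (cDom C f) (cDom C i) \<and> cCmp C i u = f))"

definition is_cokernel :: "('o, 'm) excat \<Rightarrow> 'm \<Rightarrow> 'm \<Rightarrow> bool" where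
  "is_cokernel C d i \<longleftrightarrow> i \<in> cAr C \<and> d \<in> cAr C \<and> cCod C i = cDom C d \<and>
     cCmp C d i = cZero C (cDom C i) (cCod C d) \<and>
     (\<forall>g\<in>cAr C. cDom C g = cCod C i \<and> cCmp C g i = cZero C (cDom C i) (cCod C g) \<longrightarrow>
        (\<exists>!u. u \<in> hom C (cCod C d) (cCod C g) \<and> cCmp C u d = g))"

definition kc_pair :: "('o, 'm) excat \<Rightarrow> 'm \<Rightarrow> 'm \<Rightarrow> bool" where
  "kc_pair C i d \<longleftrightarrow> is_kernel C i d \<and> is_cokernel C d i"

definition is_iso :: "('o, 'm) excat \<Rightarrow> 'm \<Rightarrow> bool" where
  "is_iso C f \<longleftrightarrow> f \<in> cAr C \<and>
     (\<exists>g\<in>hom C (cCod C f) (cDom C f). cCmp C g f = cId C (cDom C f) \<and> cCmp C f g = cId C (cCod C f))"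

definition adm_mono :: "('o, 'm) excat \<Rightarrow> 'm \<Rightarrow> bool" where
  "adm_mono C i \<longleftrightarrow> (\<exists>d. (i, d) \<in> cConfl C)"

definition adm_epi :: "('o, 'm) excat \<Rightarrow> 'm \<Rightarrow> bool" where
  "adm_epi C d \<longleftrightarrow> (\<exists>i. (i, d) \<in> cConfl C)"

text \<open>Pushout square: i : A \<rightarrow> B, f : A \<rightarrow> A', i' : A' \<rightarrow> B', f' : B \<rightarrow> B'.\<close>
definition is_pushout :: "('o, 'm) excat \<Rightarrow> 'm \<Rightarrow> 'm \<Rightarrow> 'm \<Rightarrow> 'm \<Rightarrow> bool" where
  "is_pushout C i f i' f' \<longleftrightarrow> i \<in> cAr C \<and> f \<in> cAr C \<and> cDom C i = cDom C f \<and>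
     i' \<in> hom C (cCod C f) (cCod C i') \<and> f' \<in> hom C (cCod C i) (cCod C i') \<and>
     cCmp C i' f = cCmp C f' i \<and>
     (\<forall>g\<in>cAr C. \<forall>h\<in>cAr C. cDom C g = cCod C f \<and> cDom C h = cCod C i \<and> cCod C g = cCod C h \<and>
        cCmp C g f = cCmp C h i \<longrightarrow>
        (\<exists>!u. u \<in> hom C (cCod C i') (cCod C g) \<and> cCmp C u i' = g \<and> cCmp C u f' = h))"

text \<open>Pullback square: d : B \<rightarrow> C0, f : C0' \<rightarrow> C0, d' : B' \<rightarrow> C0', f' : B' \<rightarrow> B.\<close>
definition is_pullback :: "('o, 'm) excat \<Rightarrow> 'm \<Rightarrow> 'm \<Rightarrow> 'm \<Rightarrow> 'm \<Rightarrow> bool" where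
  "is_pullback C d f d' f' \<longleftrightarrow> d \<in> cAr C \<and> f \<in> cAr C \<and> cCod C d = cCod C f \<and>
     d' \<in> hom C (cDom C d') (cDom C f) \<and> f' \<in> hom C (cDom C d') (cDom C d) \<and>
     cCmp C d f' = cCmp C f d' \<and>
     (\<forall>g\<in>cAr C. \<forall>h\<in>cAr C. cCod C g = cDom C f \<and> cCod C h = cDom C d \<and> cDom C g = cDom C h \<and>
        cCmp C f g = cCmp C d h \<longrightarrow>
        (\<exists>!u. u \<in> hom C (cDom C g) (cDom C d') \<and> cCmp C d' u = g \<and> cCmp C f' u = h))"

text \<open>Exact category (Quillen), in the standard axiomatisation of Keller/Buehler:
an additive category with a class of kernel-cokernel pairs closed under isomorphism
satisfying [E0], [E0op], [E1], [E1op], [E2], [E2op].\<close>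
definition exact_category :: "('o, 'm) excat \<Rightarrow> bool" where
  "exact_category C \<longleftrightarrow> additive C \<and>
     (\<forall>(i, d)\<in>cConfl C. kc_pair C i d) \<and>
     (\<forall>i d i' d' a b c. (i, d) \<in> cConfl C \<and> i' \<in> cAr C \<and> d' \<in> cAr C \<and> cCod C i' = cDom C d' \<and>
        is_iso C a \<and> is_iso C b \<and> is_iso C c \<and>
        a \<in> hom C (cDom C i) (cDom C i') \<and> b \<in> hom C (cCod C i) (cCod C i') \<and>
        c \<in> hom C (cCod C d) (cCod C d') \<and>
        cCmp C b i = cCmp C i' a \<and> cCmp C c d = cCmp C d' b \<longrightarrow> (i', d') \<in> cConfl C) \<and>
     (\<forall>X\<in>cOb C. adm_mono C (cId C X)) \<and>
     (\<forall>X\<in>cOb C. adm_epi C (cId C X)) \<and>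
     (\<forall>i j. adm_mono C i \<and> adm_mono C j \<and> cCod C i = cDom C j \<longrightarrow> adm_mono C (cCmp C j i)) \<and>
     (\<forall>d e. adm_epi C d \<and> adm_epi C e \<and> cCod C d = cDom C e \<longrightarrow> adm_epi C (cCmp C e d)) \<and>
     (\<forall>i f. adm_mono C i \<and> f \<in> cAr C \<and> cDom C f = cDom C i \<longrightarrow>
        (\<exists>i' f'. is_pushout C i f i' f' \<and> adm_mono C i')) \<and>
     (\<forall>d f. adm_epi C d \<and> f \<in> cAr C \<and> cCod C f = cCod C d \<longrightarrow>
        (\<exists>d' f'. is_pullback C d f d' f' \<and> adm_epi C d'))"

definition is_functor ::
  "('o1, 'm1) excat \<Rightarrow> ('o2, 'm2) excat \<Rightarrow> ('o1 \<Rightarrow> 'o2) \<Rightarrow> ('m1 \<Rightarrow> 'm2) \<Rightarrow> bool" where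
  "is_functor A B Fo Fm \<longleftrightarrow>
     (\<forall>X\<in>cOb A. Fo X \<in> cOb B \<and> Fm (cId A X) = cId B (Fo X)) \<and>
     (\<forall>f\<in>cAr A. Fm f \<in> hom B (Fo (cDom A f)) (Fo (cCod A f))) \<and>
     (\<forall>f\<in>cAr A. \<forall>g\<in>cAr A. cCod A f = cDom A g \<longrightarrow> Fm (cCmp A g f) = cCmp B (Fm g) (Fm f))"

definition additive_functor ::
  "('o1, 'm1) excat \<Rightarrow> ('o2, 'm2) excat \<Rightarrow> ('o1 \<Rightarrow> 'o2) \<Rightarrow> ('m1 \<Rightarrow> 'm2) \<Rightarrow> bool" where
  "additive_functor A B Fo Fm \<longleftrightarrow> is_functor A B Fo Fm \<and>
     (\<forall>f\<in>cAr A. \<forall>g\<in>cAr A. cDom A f = cDom A g \<and> cCod A f = cCod A g \<longrightarrow>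
        Fm (cPlus A f g) = cPlus B (Fm f) (Fm g))"

definition exact_functor ::
  "('o1, 'm1) excat \<Rightarrow> ('o2, 'm2) excat \<Rightarrow> ('o1 \<Rightarrow> 'o2) \<Rightarrow> ('m1 \<Rightarrow> 'm2) \<Rightarrow> bool" where
  "exact_functor A B Fo Fm \<longleftrightarrow> additive_functor A B Fo Fm \<and>
     (\<forall>(i, d)\<in>cConfl A. (Fm i, Fm d) \<in> cConfl B)"

definition reflects_adm_epi ::
  "('o1, 'm1) excat \<Rightarrow> ('o2, 'm2) excat \<Rightarrow> ('m1 \<Rightarrow> 'm2) \<Rightarrow> bool" where
  "reflects_adm_epi A B Fm \<longleftrightarrow> (\<forall>f\<in>cAr A. adm_epi B (Fm f) \<longrightarrow> adm_epi A f)"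

definition reflects_adm_mono ::
  "('o1, 'm1) excat \<Rightarrow> ('o2, 'm2) excat \<Rightarrow> ('m1 \<Rightarrow> 'm2) \<Rightarrow> bool" where
  "reflects_adm_mono A B Fm \<longleftrightarrow> (\<forall>f\<in>cAr A. adm_mono B (Fm f) \<longrightarrow> adm_mono A f)"

definition reflects_exact ::
  "('o1, 'm1) excat \<Rightarrow> ('o2, 'm2) excat \<Rightarrow> ('m1 \<Rightarrow> 'm2) \<Rightarrow> bool" where
  "reflects_exact A B Fm \<longleftrightarrow>
     (\<forall>i\<in>cAr A. \<forall>d\<in>cAr A. cCod A i = cDom A d \<and> (Fm i, Fm d) \<in> cConfl B \<longrightarrow> (i, d) \<in> cConfl A)"

definition cond_i' ::
  "('o1, 'm1) excat \<Rightarrow> ('o2, 'm2) excat \<Rightarrow> ('o1 \<Rightarrow> 'o2) \<Rightarrow> ('m1 \<Rightarrow> 'm2) \<Rightarrow> bool" where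
  "cond_i' A B Fo Fm \<longleftrightarrow>
     (\<forall>X\<in>cOb A. \<forall>t. adm_epi B t \<and> cCod B t = Fo X \<longrightarrow>
        (\<exists>z u. adm_epi A z \<and> cCod A z = X \<and> u \<in> hom B (Fo (cDom A z)) (cDom B t) \<and>
               cCmp B t u = Fm z))"

definition cond_ii' ::
  "('o1, 'm1) excat \<Rightarrow> ('o2, 'm2) excat \<Rightarrow> ('o1 \<Rightarrow> 'o2) \<Rightarrow> ('m1 \<Rightarrow> 'm2) \<Rightarrow> bool" where
  "cond_ii' A B Fo Fm \<longleftrightarrow>
     (\<forall>X\<in>cOb A. \<forall>Y\<in>cOb A. \<forall>g\<in>hom B (Fo X) (Fo Y).
        (\<exists>p h. adm_epi A p \<and> cCod A p = X \<and> h \<in> hom A (cDom A p) Y \<and>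
               cCmp B g (Fm p) = Fm h))"

definition cond_star' ::
  "('o1, 'm1) excat \<Rightarrow> ('o2, 'm2) excat \<Rightarrow> ('o1 \<Rightarrow> 'o2) \<Rightarrow> ('m1 \<Rightarrow> 'm2) \<Rightarrow> bool" where
  "cond_star' A B Fo Fm \<longleftrightarrow>
     (\<forall>T\<in>cOb B. \<exists>U\<in>cOb A. \<exists>e. adm_epi B e \<and> cDom B e = Fo U \<and> cCod B e = T)"

definition cond_starstar' ::
  "('o1, 'm1) excat \<Rightarrow> ('o2, 'm2) excat \<Rightarrow> ('o1 \<Rightarrow> 'o2) \<Rightarrow> ('m1 \<Rightarrow> 'm2) \<Rightarrow> bool" where
  "cond_starstar' A B Fo Fm \<longleftrightarrow>
     (\<forall>X\<in>cOb A. \<forall>g\<in>cAr B. cDom B g = Fo X \<longrightarrow>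
        (\<exists>p h e. adm_epi A p \<and> cCod A p = X \<and> h \<in> cAr A \<and> cDom A h = cDom A p \<and>
                 adm_epi B e \<and> cDom B e = Fo (cCod A h) \<and> cCod B e = cCod B g \<and>
                 cCmp B g (Fm p) = cCmp B e (Fm h)))"

end

theory Submission
  imports Defs
begin

text \<open>By (*') for \<gamma>, every object X of G is covered by an admissible epimorphism
e : \<gamma>U \<rightarrow> X. Conditions (i'), (**') and (ii') for \<eta> can be checked object by object; at
objects \<gamma>U they are inherited from \<eta>\<gamma> at U, and they descend from the domain of an admissible
epimorphism e to its codomain by composing the resulting admissible epimorphisms with e (for (i')
after pulling the given epimorphism back along \<eta>e). For (ii') the target object must be covered
as well: a morphism g : \<eta>X \<rightarrow> \<eta>Y is lifted through \<eta>e by pulling \<eta>e back along g and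
then using (i') for \<eta>, which is (b).\<close>

lemma exact_category_is_category: "exact_category C \<Longrightarrow> is_category C"
  by (simp add: exact_category_def additive_def preadditive_def)

lemma comp_in_hom:
  "is_category C \<Longrightarrow> f \<in> hom C X Y \<Longrightarrow> g \<in> hom C Y Z \<Longrightarrow> cCmp C g f \<in> hom C X Z"
  unfolding is_category_def by blast

lemma comp_assoc:
  "is_category C \<Longrightarrow> f \<in> hom C W X \<Longrightarrow> g \<in> hom C X Y \<Longrightarrow> h \<in> hom C Y Z \<Longrightarrow>
   cCmp C h (cCmp C g f) = cCmp C (cCmp C h g) f"
  unfolding is_category_def by blast

lemma dom_in_ob: "is_category C \<Longrightarrow> f \<in> hom C X Y \<Longrightarrow> X \<in> cOb C"
  unfolding is_category_def hom_def by blast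

lemma adm_epi_in_hom: "exact_category C \<Longrightarrow> adm_epi C d \<Longrightarrow> d \<in> hom C (cDom C d) (cCod C d)"
  unfolding exact_category_def adm_epi_def kc_pair_def is_kernel_def hom_def by fast

lemma adm_epi_comp:
  "exact_category C \<Longrightarrow> adm_epi C d \<Longrightarrow> adm_epi C e \<Longrightarrow> cCod C d = cDom C e \<Longrightarrow>
   adm_epi C (cCmp C e d)"
  unfolding exact_category_def by blast

lemma adm_epi_pullback:
  assumes "exact_category C" "adm_epi C d" "f \<in> hom C X (cCod C d)"
  obtains d' f' where "adm_epi C d'" "cCod C d' = X" "f' \<in> hom C (cDom C d') (cDom C d)"
    "cCmp C d f' = cCmp C f d'"
proof -
  obtain d' f' where "is_pullback C d f d' f'" "adm_epi C d'"
    using assms unfolding exact_category_def hom_def by blast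
  with assms(3) show ?thesis
    using that unfolding is_pullback_def hom_def by auto
qed

lemma functor_in_hom:
  "is_functor A B Fo Fm \<Longrightarrow> f \<in> hom A X Y \<Longrightarrow> Fm f \<in> hom B (Fo X) (Fo Y)"
  unfolding is_functor_def hom_def by blast

lemma functor_comp:
  "is_functor A B Fo Fm \<Longrightarrow> f \<in> hom A X Y \<Longrightarrow> g \<in> hom A Y Z \<Longrightarrow>
   Fm (cCmp A g f) = cCmp B (Fm g) (Fm f)"
  unfolding is_functor_def hom_def by auto

lemma functor_ob: "is_functor A B Fo Fm \<Longrightarrow> X \<in> cOb A \<Longrightarrow> Fo X \<in> cOb B"
  unfolding is_functor_def by blast

lemma exact_functor_is_functor: "exact_functor A B Fo Fm \<Longrightarrow> is_functor A B Fo Fm"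
  unfolding exact_functor_def additive_functor_def by blast

lemma exact_functor_conflation:
  "exact_functor A B Fo Fm \<Longrightarrow> (i, d) \<in> cConfl A \<Longrightarrow> (Fm i, Fm d) \<in> cConfl B"
  unfolding exact_functor_def by blast

lemma exact_functor_adm_epi: "exact_functor A B Fo Fm \<Longrightarrow> adm_epi A d \<Longrightarrow> adm_epi B (Fm d)"
  unfolding adm_epi_def using exact_functor_conflation by metis

lemma exact_functor_adm_mono: "exact_functor A B Fo Fm \<Longrightarrow> adm_mono A i \<Longrightarrow> adm_mono B (Fm i)"
  unfolding adm_mono_def using exact_functor_conflation by metis

lemma reflects_adm_epi_of_comp:
  assumes "exact_functor G H \<eta>o \<eta>m" "reflects_adm_epi F H (\<eta>m \<circ> \<gamma>m)"
  shows "reflects_adm_epi F G \<gamma>m"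
  using assms exact_functor_adm_epi unfolding reflects_adm_epi_def by fastforce

lemma reflects_adm_mono_of_comp:
  assumes "exact_functor G H \<eta>o \<eta>m" "reflects_adm_mono F H (\<eta>m \<circ> \<gamma>m)"
  shows "reflects_adm_mono F G \<gamma>m"
  using assms exact_functor_adm_mono unfolding reflects_adm_mono_def by fastforce

lemma reflects_exact_of_comp:
  assumes "exact_functor G H \<eta>o \<eta>m" "reflects_exact F H (\<eta>m \<circ> \<gamma>m)"
  shows "reflects_exact F G \<gamma>m"
  using assms exact_functor_conflation unfolding reflects_exact_def by fastforce

lemma cond_star'_of_comp:
  assumes "is_functor F G \<gamma>o \<gamma>m" "cond_star' F H (\<eta>o \<circ> \<gamma>o) (\<eta>m \<circ> \<gamma>m)"
  shows "cond_star' G H \<eta>o \<eta>m"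
  using assms functor_ob unfolding cond_star'_def by fastforce

definition cond_i'_at ::
  "('o1, 'm1) excat \<Rightarrow> ('o2, 'm2) excat \<Rightarrow> ('o1 \<Rightarrow> 'o2) \<Rightarrow> ('m1 \<Rightarrow> 'm2) \<Rightarrow> 'o1 \<Rightarrow> bool" where
  "cond_i'_at A B Fo Fm X \<longleftrightarrow>
     (\<forall>t. adm_epi B t \<and> cCod B t = Fo X \<longrightarrow>
        (\<exists>z u. adm_epi A z \<and> cCod A z = X \<and> u \<in> hom B (Fo (cDom A z)) (cDom B t) \<and>
               cCmp B t u = Fm z))"

lemma cond_i'_iff_at: "cond_i' A B Fo Fm \<longleftrightarrow> (\<forall>X\<in>cOb A. cond_i'_at A B Fo Fm X)"
  unfolding cond_i'_def cond_i'_at_def ..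

lemma cond_i'_at_image:
  assumes F: "exact_category F" and \<gamma>: "exact_functor F G \<gamma>o \<gamma>m"
    and at: "cond_i'_at F H (\<eta>o \<circ> \<gamma>o) (\<eta>m \<circ> \<gamma>m) U"
  shows "cond_i'_at G H \<eta>o \<eta>m (\<gamma>o U)"
  unfolding cond_i'_at_def
proof (intro allI impI)
  fix t assume "adm_epi H t \<and> cCod H t = \<eta>o (\<gamma>o U)"
  then obtain z u where z: "adm_epi F z" "cCod F z = U"
    and u: "u \<in> hom H (\<eta>o (\<gamma>o (cDom F z))) (cDom H t)" and tu: "cCmp H t u = \<eta>m (\<gamma>m z)"
    using at unfolding cond_i'_at_def by auto
  have "\<gamma>m z \<in> hom G (\<gamma>o (cDom F z)) (\<gamma>o U)"
    using functor_in_hom[OF exact_functor_is_functor[OF \<gamma>] adm_epi_in_hom[OF F z(1)]] z(2) by simp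
  then show "\<exists>z u. adm_epi G z \<and> cCod G z = \<gamma>o U \<and> u \<in> hom H (\<eta>o (cDom G z)) (cDom H t) \<and>
      cCmp H t u = \<eta>m z"
    using exact_functor_adm_epi[OF \<gamma> z(1)] u tu
    by - (rule exI[of _ "\<gamma>m z"], rule exI[of _ u], auto simp: hom_def)
qed

lemma cond_i'_at_descent:
  assumes G: "exact_category G" and H: "exact_category H" and \<eta>: "exact_functor G H \<eta>o \<eta>m"
    and e: "adm_epi G e" "cCod G e = X" and at: "cond_i'_at G H \<eta>o \<eta>m (cDom G e)"
  shows "cond_i'_at G H \<eta>o \<eta>m X"
  unfolding cond_i'_at_def
proof (intro allI impI)
  fix t assume t: "adm_epi H t \<and> cCod H t = \<eta>o X"
  note catH = exact_category_is_category[OF H] and \<eta>fun = exact_functor_is_functor[OF \<eta>]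
  have e_hom: "e \<in> hom G (cDom G e) X"
    using adm_epi_in_hom[OF G e(1)] e(2) by simp
  have \<eta>e: "\<eta>m e \<in> hom H (\<eta>o (cDom G e)) (\<eta>o X)"
    using functor_in_hom[OF \<eta>fun e_hom] .
  have t_hom: "t \<in> hom H (cDom H t) (\<eta>o X)"
    using adm_epi_in_hom[OF H, of t] t by simp
  obtain d' f' where d': "adm_epi H d'" "cCod H d' = \<eta>o (cDom G e)"
    and f': "f' \<in> hom H (cDom H d') (cDom H t)" and square: "cCmp H t f' = cCmp H (\<eta>m e) d'"
    using adm_epi_pullback[OF H, of t "\<eta>m e"] t \<eta>e by auto
  have d'_hom: "d' \<in> hom H (cDom H d') (\<eta>o (cDom G e))"
    using adm_epi_in_hom[OF H d'(1)] d'(2) by simp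
  obtain z u where z: "adm_epi G z" "cCod G z = cDom G e"
    and u: "u \<in> hom H (\<eta>o (cDom G z)) (cDom H d')" and d'u: "cCmp H d' u = \<eta>m z"
    using at d' unfolding cond_i'_at_def by blast
  have z_hom: "z \<in> hom G (cDom G z) (cDom G e)"
    using adm_epi_in_hom[OF G z(1)] z(2) by simp
  have "cCmp H t (cCmp H f' u) = cCmp H (cCmp H (\<eta>m e) d') u"
    using comp_assoc[OF catH u f' t_hom] square by simp
  also have "\<dots> = \<eta>m (cCmp G e z)"
    using comp_assoc[OF catH u d'_hom \<eta>e] d'u functor_comp[OF \<eta>fun z_hom e_hom] by simp
  finally have "cCmp H t (cCmp H f' u) = \<eta>m (cCmp G e z)" .
  moreover have "adm_epi G (cCmp G e z)" "cCmp G e z \<in> hom G (cDom G z) X"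
    using adm_epi_comp[OF G z(1) e(1)] z(2) comp_in_hom[OF exact_category_is_category[OF G] z_hom e_hom]
    by auto
  moreover have "cCmp H f' u \<in> hom H (\<eta>o (cDom G z)) (cDom H t)"
    using comp_in_hom[OF catH u f'] .
  ultimately show "\<exists>z u. adm_epi G z \<and> cCod G z = X \<and> u \<in> hom H (\<eta>o (cDom G z)) (cDom H t) \<and>
      cCmp H t u = \<eta>m z"
    by - (rule exI[of _ "cCmp G e z"], rule exI[of _ "cCmp H f' u"], auto simp: hom_def)
qed

lemma cond_i'_of_comp:
  assumes F: "exact_category F" and G: "exact_category G" and H: "exact_category H"
    and \<gamma>: "exact_functor F G \<gamma>o \<gamma>m" and \<eta>: "exact_functor G H \<eta>o \<eta>m"
    and star: "cond_star' F G \<gamma>o \<gamma>m" and i': "cond_i' F H (\<eta>o \<circ> \<gamma>o) (\<eta>m \<circ> \<gamma>m)"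
  shows "cond_i' G H \<eta>o \<eta>m"
  unfolding cond_i'_iff_at
proof
  fix X assume "X \<in> cOb G"
  then obtain U e where "U \<in> cOb F" "adm_epi G e" "cDom G e = \<gamma>o U" "cCod G e = X"
    using star unfolding cond_star'_def by blast
  then show "cond_i'_at G H \<eta>o \<eta>m X"
    using cond_i'_at_descent[OF G H \<eta>] cond_i'_at_image[OF F \<gamma>] i' cond_i'_iff_at by metis
qed

definition cond_starstar'_at ::
  "('o1, 'm1) excat \<Rightarrow> ('o2, 'm2) excat \<Rightarrow> ('o1 \<Rightarrow> 'o2) \<Rightarrow> ('m1 \<Rightarrow> 'm2) \<Rightarrow> 'o1 \<Rightarrow> bool" where
  "cond_starstar'_at A B Fo Fm X \<longleftrightarrow>
     (\<forall>g\<in>cAr B. cDom B g = Fo X \<longrightarrow>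
        (\<exists>p h e. adm_epi A p \<and> cCod A p = X \<and> h \<in> cAr A \<and> cDom A h = cDom A p \<and>
                 adm_epi B e \<and> cDom B e = Fo (cCod A h) \<and> cCod B e = cCod B g \<and>
                 cCmp B g (Fm p) = cCmp B e (Fm h)))"

lemma cond_starstar'_iff_at:
  "cond_starstar' A B Fo Fm \<longleftrightarrow> (\<forall>X\<in>cOb A. cond_starstar'_at A B Fo Fm X)"
  unfolding cond_starstar'_def cond_starstar'_at_def ..

lemma cond_starstar'_at_image:
  assumes F: "exact_category F" and \<gamma>: "exact_functor F G \<gamma>o \<gamma>m"
    and at: "cond_starstar'_at F H (\<eta>o \<circ> \<gamma>o) (\<eta>m \<circ> \<gamma>m) U"
  shows "cond_starstar'_at G H \<eta>o \<eta>m (\<gamma>o U)"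
  unfolding cond_starstar'_at_def
proof (intro ballI impI)
  fix g assume "g \<in> cAr H" "cDom H g = \<eta>o (\<gamma>o U)"
  then obtain p h e where p: "adm_epi F p" "cCod F p = U" and h: "h \<in> cAr F" "cDom F h = cDom F p"
    and e: "adm_epi H e" "cDom H e = \<eta>o (\<gamma>o (cCod F h))" "cCod H e = cCod H g"
    and square: "cCmp H g (\<eta>m (\<gamma>m p)) = cCmp H e (\<eta>m (\<gamma>m h))"
    using at unfolding cond_starstar'_at_def by auto
  note \<gamma>fun = exact_functor_is_functor[OF \<gamma>]
  have "\<gamma>m p \<in> hom G (\<gamma>o (cDom F p)) (\<gamma>o U)"
    using functor_in_hom[OF \<gamma>fun adm_epi_in_hom[OF F p(1)]] p(2) by simp
  moreover have "\<gamma>m h \<in> hom G (\<gamma>o (cDom F p)) (\<gamma>o (cCod F h))"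
    using functor_in_hom[OF \<gamma>fun, of h] h by (simp add: hom_def)
  ultimately show "\<exists>p h e. adm_epi G p \<and> cCod G p = \<gamma>o U \<and> h \<in> cAr G \<and> cDom G h = cDom G p \<and>
      adm_epi H e \<and> cDom H e = \<eta>o (cCod G h) \<and> cCod H e = cCod H g \<and>
      cCmp H g (\<eta>m p) = cCmp H e (\<eta>m h)"
    using exact_functor_adm_epi[OF \<gamma> p(1)] e square
    by - (rule exI[of _ "\<gamma>m p"], rule exI[of _ "\<gamma>m h"], rule exI[of _ e], auto simp: hom_def)
qed

lemma cond_starstar'_at_descent:
  assumes G: "exact_category G" and H: "exact_category H" and \<eta>: "exact_functor G H \<eta>o \<eta>m"
    and e: "adm_epi G e" "cCod G e = X" and at: "cond_starstar'_at G H \<eta>o \<eta>m (cDom G e)"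
  shows "cond_starstar'_at G H \<eta>o \<eta>m X"
  unfolding cond_starstar'_at_def
proof (intro ballI impI)
  fix g assume g: "g \<in> cAr H" "cDom H g = \<eta>o X"
  note catH = exact_category_is_category[OF H] and \<eta>fun = exact_functor_is_functor[OF \<eta>]
  have e_hom: "e \<in> hom G (cDom G e) X"
    using adm_epi_in_hom[OF G e(1)] e(2) by simp
  have \<eta>e: "\<eta>m e \<in> hom H (\<eta>o (cDom G e)) (\<eta>o X)"
    using functor_in_hom[OF \<eta>fun e_hom] .
  have g_hom: "g \<in> hom H (\<eta>o X) (cCod H g)"
    using g by (simp add: hom_def)
  have "cCmp H g (\<eta>m e) \<in> hom H (\<eta>o (cDom G e)) (cCod H g)"
    using comp_in_hom[OF catH \<eta>e g_hom] .
  then obtain p h e' where p: "adm_epi G p" "cCod G p = cDom G e" and h: "h \<in> cAr G" "cDom G h = cDom G p"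
    and e': "adm_epi H e'" "cDom H e' = \<eta>o (cCod G h)" "cCod H e' = cCod H g"
    and square: "cCmp H (cCmp H g (\<eta>m e)) (\<eta>m p) = cCmp H e' (\<eta>m h)"
    using at unfolding cond_starstar'_at_def hom_def by auto
  have p_hom: "p \<in> hom G (cDom G p) (cDom G e)"
    using adm_epi_in_hom[OF G p(1)] p(2) by simp
  have "cCmp H g (\<eta>m (cCmp G e p)) = cCmp H e' (\<eta>m h)"
    using functor_comp[OF \<eta>fun p_hom e_hom] comp_assoc[OF catH functor_in_hom[OF \<eta>fun p_hom] \<eta>e g_hom]
      square by simp
  moreover have "adm_epi G (cCmp G e p)" "cCmp G e p \<in> hom G (cDom G p) X"
    using adm_epi_comp[OF G p(1) e(1)] p(2) comp_in_hom[OF exact_category_is_category[OF G] p_hom e_hom]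
    by auto
  ultimately show "\<exists>p h e. adm_epi G p \<and> cCod G p = X \<and> h \<in> cAr G \<and> cDom G h = cDom G p \<and>
      adm_epi H e \<and> cDom H e = \<eta>o (cCod G h) \<and> cCod H e = cCod H g \<and>
      cCmp H g (\<eta>m p) = cCmp H e (\<eta>m h)"
    using h e' by - (rule exI[of _ "cCmp G e p"], rule exI[of _ h], rule exI[of _ e'], auto simp: hom_def)
qed

lemma cond_starstar'_of_comp:
  assumes F: "exact_category F" and G: "exact_category G" and H: "exact_category H"
    and \<gamma>: "exact_functor F G \<gamma>o \<gamma>m" and \<eta>: "exact_functor G H \<eta>o \<eta>m"
    and star: "cond_star' F G \<gamma>o \<gamma>m" and starstar: "cond_starstar' F H (\<eta>o \<circ> \<gamma>o) (\<eta>m \<circ> \<gamma>m)"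
  shows "cond_starstar' G H \<eta>o \<eta>m"
  unfolding cond_starstar'_iff_at
proof
  fix X assume "X \<in> cOb G"
  then obtain U e where "U \<in> cOb F" "adm_epi G e" "cDom G e = \<gamma>o U" "cCod G e = X"
    using star unfolding cond_star'_def by blast
  then show "cond_starstar'_at G H \<eta>o \<eta>m X"
    using cond_starstar'_at_descent[OF G H \<eta>] cond_starstar'_at_image[OF F \<gamma>] starstar
      cond_starstar'_iff_at by metis
qed

definition cond_ii'_at ::
  "('o1, 'm1) excat \<Rightarrow> ('o2, 'm2) excat \<Rightarrow> ('o1 \<Rightarrow> 'o2) \<Rightarrow> ('m1 \<Rightarrow> 'm2) \<Rightarrow> 'o1 \<Rightarrow> 'o1 \<Rightarrow> bool"
  where
  "cond_ii'_at A B Fo Fm X Y \<longleftrightarrow>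
     (\<forall>g\<in>hom B (Fo X) (Fo Y).
        (\<exists>p h. adm_epi A p \<and> cCod A p = X \<and> h \<in> hom A (cDom A p) Y \<and> cCmp B g (Fm p) = Fm h))"

lemma cond_ii'_iff_at:
  "cond_ii' A B Fo Fm \<longleftrightarrow> (\<forall>X\<in>cOb A. \<forall>Y\<in>cOb A. cond_ii'_at A B Fo Fm X Y)"
  unfolding cond_ii'_def cond_ii'_at_def ..

lemma cond_ii'_at_image:
  assumes F: "exact_category F" and \<gamma>: "exact_functor F G \<gamma>o \<gamma>m"
    and at: "cond_ii'_at F H (\<eta>o \<circ> \<gamma>o) (\<eta>m \<circ> \<gamma>m) U V"
  shows "cond_ii'_at G H \<eta>o \<eta>m (\<gamma>o U) (\<gamma>o V)"
  unfolding cond_ii'_at_def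
proof
  fix g assume "g \<in> hom H (\<eta>o (\<gamma>o U)) (\<eta>o (\<gamma>o V))"
  then obtain p h where p: "adm_epi F p" "cCod F p = U" and h: "h \<in> hom F (cDom F p) V"
    and square: "cCmp H g (\<eta>m (\<gamma>m p)) = \<eta>m (\<gamma>m h)"
    using at unfolding cond_ii'_at_def by auto
  note \<gamma>fun = exact_functor_is_functor[OF \<gamma>]
  have "\<gamma>m p \<in> hom G (\<gamma>o (cDom F p)) (\<gamma>o U)"
    using functor_in_hom[OF \<gamma>fun adm_epi_in_hom[OF F p(1)]] p(2) by simp
  moreover have "\<gamma>m h \<in> hom G (\<gamma>o (cDom F p)) (\<gamma>o V)"
    using functor_in_hom[OF \<gamma>fun h] .
  ultimately show "\<exists>p h. adm_epi G p \<and> cCod G p = \<gamma>o U \<and> h \<in> hom G (cDom G p) (\<gamma>o V) \<and>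
      cCmp H g (\<eta>m p) = \<eta>m h"
    using exact_functor_adm_epi[OF \<gamma> p(1)] square
    by - (rule exI[of _ "\<gamma>m p"], rule exI[of _ "\<gamma>m h"], auto simp: hom_def)
qed

lemma cond_ii'_at_descent_source:
  assumes G: "exact_category G" and H: "exact_category H" and \<eta>: "exact_functor G H \<eta>o \<eta>m"
    and e: "adm_epi G e" "cCod G e = X" and at: "cond_ii'_at G H \<eta>o \<eta>m (cDom G e) Y"
  shows "cond_ii'_at G H \<eta>o \<eta>m X Y"
  unfolding cond_ii'_at_def
proof
  fix g assume g: "g \<in> hom H (\<eta>o X) (\<eta>o Y)"
  note catH = exact_category_is_category[OF H] and \<eta>fun = exact_functor_is_functor[OF \<eta>]
  have e_hom: "e \<in> hom G (cDom G e) X"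
    using adm_epi_in_hom[OF G e(1)] e(2) by simp
  have \<eta>e: "\<eta>m e \<in> hom H (\<eta>o (cDom G e)) (\<eta>o X)"
    using functor_in_hom[OF \<eta>fun e_hom] .
  obtain p h where p: "adm_epi G p" "cCod G p = cDom G e" and h: "h \<in> hom G (cDom G p) Y"
    and lift: "cCmp H (cCmp H g (\<eta>m e)) (\<eta>m p) = \<eta>m h"
    using at comp_in_hom[OF catH \<eta>e g] unfolding cond_ii'_at_def by blast
  have p_hom: "p \<in> hom G (cDom G p) (cDom G e)"
    using adm_epi_in_hom[OF G p(1)] p(2) by simp
  have "cCmp H g (\<eta>m (cCmp G e p)) = \<eta>m h"
    using functor_comp[OF \<eta>fun p_hom e_hom] comp_assoc[OF catH functor_in_hom[OF \<eta>fun p_hom] \<eta>e g]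
      lift by simp
  moreover have "adm_epi G (cCmp G e p)" "cCmp G e p \<in> hom G (cDom G p) X"
    using adm_epi_comp[OF G p(1) e(1)] p(2) comp_in_hom[OF exact_category_is_category[OF G] p_hom e_hom]
    by auto
  ultimately show "\<exists>p h. adm_epi G p \<and> cCod G p = X \<and> h \<in> hom G (cDom G p) Y \<and>
      cCmp H g (\<eta>m p) = \<eta>m h"
    using h by - (rule exI[of _ "cCmp G e p"], rule exI[of _ h], auto simp: hom_def)
qed

lemma cond_ii'_at_descent_target:
  assumes G: "exact_category G" and H: "exact_category H" and \<eta>: "exact_functor G H \<eta>o \<eta>m"
    and i': "cond_i'_at G H \<eta>o \<eta>m X" and e: "adm_epi G e" "cCod G e = Y"
    and at: "\<And>X'. X' \<in> cOb G \<Longrightarrow> cond_ii'_at G H \<eta>o \<eta>m X' (cDom G e)"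
  shows "cond_ii'_at G H \<eta>o \<eta>m X Y"
  unfolding cond_ii'_at_def
proof
  fix g assume g: "g \<in> hom H (\<eta>o X) (\<eta>o Y)"
  note catG = exact_category_is_category[OF G] and catH = exact_category_is_category[OF H]
    and \<eta>fun = exact_functor_is_functor[OF \<eta>]
  have e_hom: "e \<in> hom G (cDom G e) Y"
    using adm_epi_in_hom[OF G e(1)] e(2) by simp
  have \<eta>e: "\<eta>m e \<in> hom H (\<eta>o (cDom G e)) (\<eta>o Y)"
    using functor_in_hom[OF \<eta>fun e_hom] .
  obtain d' f' where d': "adm_epi H d'" "cCod H d' = \<eta>o X"
    and f': "f' \<in> hom H (cDom H d') (\<eta>o (cDom G e))" and square: "cCmp H (\<eta>m e) f' = cCmp H g d'"
    using adm_epi_pullback[OF H exact_functor_adm_epi[OF \<eta> e(1)], of g] \<eta>e g by (auto simp: hom_def)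
  have d'_hom: "d' \<in> hom H (cDom H d') (\<eta>o X)"
    using adm_epi_in_hom[OF H d'(1)] d'(2) by simp
  obtain z u where z: "adm_epi G z" "cCod G z = X"
    and u: "u \<in> hom H (\<eta>o (cDom G z)) (cDom H d')" and d'u: "cCmp H d' u = \<eta>m z"
    using i' d' unfolding cond_i'_at_def by blast
  have z_hom: "z \<in> hom G (cDom G z) X"
    using adm_epi_in_hom[OF G z(1)] z(2) by simp
  have f'u: "cCmp H f' u \<in> hom H (\<eta>o (cDom G z)) (\<eta>o (cDom G e))"
    using comp_in_hom[OF catH u f'] .
  obtain p h where p: "adm_epi G p" "cCod G p = cDom G z" and h: "h \<in> hom G (cDom G p) (cDom G e)"
    and lift: "cCmp H (cCmp H f' u) (\<eta>m p) = \<eta>m h"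
    using at[OF dom_in_ob[OF catG z_hom]] f'u unfolding cond_ii'_at_def by blast
  have p_hom: "p \<in> hom G (cDom G p) (cDom G z)"
    using adm_epi_in_hom[OF G p(1)] p(2) by simp
  note \<eta>p = functor_in_hom[OF \<eta>fun p_hom] and \<eta>z = functor_in_hom[OF \<eta>fun z_hom]
  have "cCmp H g (\<eta>m (cCmp G z p)) = cCmp H (cCmp H g (\<eta>m z)) (\<eta>m p)"
    using functor_comp[OF \<eta>fun p_hom z_hom] comp_assoc[OF catH \<eta>p \<eta>z g] by simp
  also have "\<dots> = cCmp H (cCmp H (cCmp H g d') u) (\<eta>m p)"
    using comp_assoc[OF catH u d'_hom g] d'u by simp
  also have "\<dots> = cCmp H (\<eta>m e) (cCmp H (cCmp H f' u) (\<eta>m p))"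
    using square comp_assoc[OF catH u f' \<eta>e] comp_assoc[OF catH \<eta>p f'u \<eta>e] by simp
  also have "\<dots> = \<eta>m (cCmp G e h)"
    using lift functor_comp[OF \<eta>fun h e_hom] by simp
  finally have "cCmp H g (\<eta>m (cCmp G z p)) = \<eta>m (cCmp G e h)" .
  moreover have "adm_epi G (cCmp G z p)" "cCmp G z p \<in> hom G (cDom G p) X"
    using adm_epi_comp[OF G p(1) z(1)] p(2) comp_in_hom[OF catG p_hom z_hom] by auto
  moreover have "cCmp G e h \<in> hom G (cDom G p) Y"
    using comp_in_hom[OF catG h e_hom] .
  ultimately show "\<exists>p h. adm_epi G p \<and> cCod G p = X \<and> h \<in> hom G (cDom G p) Y \<and>
      cCmp H g (\<eta>m p) = \<eta>m h"
    by - (rule exI[of _ "cCmp G z p"], rule exI[of _ "cCmp G e h"], auto simp: hom_def)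
qed

lemma cond_ii'_of_comp:
  assumes F: "exact_category F" and G: "exact_category G" and H: "exact_category H"
    and \<gamma>: "exact_functor F G \<gamma>o \<gamma>m" and \<eta>: "exact_functor G H \<eta>o \<eta>m"
    and star: "cond_star' F G \<gamma>o \<gamma>m" and i': "cond_i' F H (\<eta>o \<circ> \<gamma>o) (\<eta>m \<circ> \<gamma>m)"
    and ii': "cond_ii' F H (\<eta>o \<circ> \<gamma>o) (\<eta>m \<circ> \<gamma>m)"
  shows "cond_ii' G H \<eta>o \<eta>m"
proof -
  have cover: "\<exists>U\<in>cOb F. \<exists>e. adm_epi G e \<and> cDom G e = \<gamma>o U \<and> cCod G e = X" if "X \<in> cOb G" for X
    using star that unfolding cond_star'_def by blast
  have into_image: "cond_ii'_at G H \<eta>o \<eta>m X (\<gamma>o V)" if "X \<in> cOb G" "V \<in> cOb F" for X V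
    using cover[OF that(1)] cond_ii'_at_descent_source[OF G H \<eta>] cond_ii'_at_image[OF F \<gamma>]
      ii' that(2) cond_ii'_iff_at by metis
  have "cond_i' G H \<eta>o \<eta>m"
    using cond_i'_of_comp[OF F G H \<gamma> \<eta> star i'] .
  then show ?thesis
    unfolding cond_ii'_iff_at cond_i'_iff_at
    using cover cond_ii'_at_descent_target[OF G H \<eta>] into_image by metis
qed

text \<open>Part (d) needs only (i') and (ii') of \<eta>\<gamma>.\<close>

theorem lemma0p8:
  fixes F :: "('o1, 'm1) excat" and G :: "('o2, 'm2) excat" and H :: "('o3, 'm3) excat"
    and \<gamma>o :: "'o1 \<Rightarrow> 'o2" and \<gamma>m :: "'m1 \<Rightarrow> 'm2"
    and \<eta>o :: "'o2 \<Rightarrow> 'o3" and \<eta>m :: "'m2 \<Rightarrow> 'm3"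
  assumes "exact_category F" and "exact_category G" and "exact_category H"
    and "exact_functor F G \<gamma>o \<gamma>m" and "exact_functor G H \<eta>o \<eta>m"
  shows
    "(reflects_adm_epi F H (\<eta>m \<circ> \<gamma>m) \<longrightarrow> reflects_adm_epi F G \<gamma>m) \<and>
     (reflects_adm_mono F H (\<eta>m \<circ> \<gamma>m) \<longrightarrow> reflects_adm_mono F G \<gamma>m) \<and>
     (reflects_exact F H (\<eta>m \<circ> \<gamma>m) \<longrightarrow> reflects_exact F G \<gamma>m) \<and>
     (cond_star' F H (\<eta>o \<circ> \<gamma>o) (\<eta>m \<circ> \<gamma>m) \<longrightarrow> cond_star' G H \<eta>o \<eta>m) \<and>
     (cond_star' F G \<gamma>o \<gamma>m \<and> cond_i' F H (\<eta>o \<circ> \<gamma>o) (\<eta>m \<circ> \<gamma>m)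
        \<longrightarrow> cond_i' G H \<eta>o \<eta>m) \<and>
     (cond_star' F G \<gamma>o \<gamma>m \<and> cond_starstar' F H (\<eta>o \<circ> \<gamma>o) (\<eta>m \<circ> \<gamma>m)
        \<longrightarrow> cond_starstar' G H \<eta>o \<eta>m) \<and>
     (cond_star' F G \<gamma>o \<gamma>m \<and>
      cond_i' F H (\<eta>o \<circ> \<gamma>o) (\<eta>m \<circ> \<gamma>m) \<and> cond_ii' F H (\<eta>o \<circ> \<gamma>o) (\<eta>m \<circ> \<gamma>m) \<and>
      cond_star' F H (\<eta>o \<circ> \<gamma>o) (\<eta>m \<circ> \<gamma>m) \<and> cond_starstar' F H (\<eta>o \<circ> \<gamma>o) (\<eta>m \<circ> \<gamma>m) \<and>
      reflects_adm_epi F H (\<eta>m \<circ> \<gamma>m)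
        \<longrightarrow> cond_ii' G H \<eta>o \<eta>m)"
proof (intro conjI impI)
  note F = assms(1) and G = assms(2) and H = assms(3) and \<gamma> = assms(4) and \<eta> = assms(5)
  show "reflects_adm_epi F G \<gamma>m" if "reflects_adm_epi F H (\<eta>m \<circ> \<gamma>m)"
    using reflects_adm_epi_of_comp[OF \<eta> that] .
  show "reflects_adm_mono F G \<gamma>m" if "reflects_adm_mono F H (\<eta>m \<circ> \<gamma>m)"
    using reflects_adm_mono_of_comp[OF \<eta> that] .
  show "reflects_exact F G \<gamma>m" if "reflects_exact F H (\<eta>m \<circ> \<gamma>m)"
    using reflects_exact_of_comp[OF \<eta> that] .
  show "cond_star' G H \<eta>o \<eta>m" if "cond_star' F H (\<eta>o \<circ> \<gamma>o) (\<eta>m \<circ> \<gamma>m)"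
    using cond_star'_of_comp[OF exact_functor_is_functor[OF \<gamma>] that] .
  show "cond_i' G H \<eta>o \<eta>m"
    if "cond_star' F G \<gamma>o \<gamma>m \<and> cond_i' F H (\<eta>o \<circ> \<gamma>o) (\<eta>m \<circ> \<gamma>m)"
    using cond_i'_of_comp[OF F G H \<gamma> \<eta>] that by blast
  show "cond_starstar' G H \<eta>o \<eta>m"
    if "cond_star' F G \<gamma>o \<gamma>m \<and> cond_starstar' F H (\<eta>o \<circ> \<gamma>o) (\<eta>m \<circ> \<gamma>m)"
    using cond_starstar'_of_comp[OF F G H \<gamma> \<eta>] that by blast
  show "cond_ii' G H \<eta>o \<eta>m"
    if "cond_star' F G \<gamma>o \<gamma>m \<and>
      cond_i' F H (\<eta>o \<circ> \<gamma>o) (\<eta>m \<circ> \<gamma>m) \<and> cond_ii' F H (\<eta>o \<circ> \<gamma>o) (\<eta>m \<circ> \<gamma>m) \<and>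
      cond_star' F H (\<eta>o \<circ> \<gamma>o) (\<eta>m \<circ> \<gamma>m) \<and> cond_starstar' F H (\<eta>o \<circ> \<gamma>o) (\<eta>m \<circ> \<gamma>m) \<and>
      reflects_adm_epi F H (\<eta>m \<circ> \<gamma>m)"
    using cond_ii'_of_comp[OF F G H \<gamma> \<eta>] that by blast
qed

end
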